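(* Let $C$ be a normal closed cone with nonempty interior in a real Banach space. Let $f:\operatorname{int} C \to \operatorname{int} C$ be order-preserving and homogeneous. Let $x, u \in \operatorname{int} C$ with $\|u\| = 1$ and let $0 < \theta < 1$. Then the following are equivalent: (a) $\limsup_{k\to\infty} d_H(f^k(x), u)^{1/k} \le \theta$; (b) there is $\lambda > 0$ such that $\limsup_{k\to\infty} d_T\big(f^k(x)/r_C(f)^k, \lambda u\big)^{1/k} \le \theta$; (c) there is $\lambda > 0$ such that $\limsup_{k\to\infty} \big\| f^k(x)/r_C(f)^k - \lambda u \big\|^{1/k} \le \theta$; (d) $\limsup_{k\to\infty} \big\| f^k(x)/\|f^k(x)\| - u \big\|^{1/k} \le \theta$.
   Context: A closed cone is a closed convex set $C \subset X$ with $\lambda C \subset C$ for $\lambda \ge 0$ and $C \cap (-C) = \{0\}$; $x\le y$ means $y-x\in C$. $C$ is normal if there is $\kappa > 0$ with $\|x\| \le \kappa\|y\|$ whenever $0 \le x \le y$. $f$ is order-preserving if $x\le y\Rightarrow f(x)\le f(y)$ and homogeneous if $f(tx)=tf(x)$ for $t>0$. For $x,y \in \operatorname{int} C$: $M(x/y) := \inf\{\beta>0 : x \le \beta y\}$, $m(x/y) := \sup\{\alpha>0 : \alpha y \le x\}$; Thompson's metric $d_T(x,y) = \max\{\log M(x/y), \log M(y/x)\}$; Hilbert's projective metric $d_H(x,y) = \log(M(x/y)/m(x/y))$. The cone spectral radius is $r_C(f) = \limsup_{k\to\infty}\|f^k(y)\|^{1/k}$ for any $y \in \operatorname{int} C$.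 *)

theory Defs
  imports "HOL-Analysis.Analysis"
begin

definition closed_cone :: "'a::real_normed_vector set \<Rightarrow> bool" where
  "closed_cone C \<longleftrightarrow> closed C \<and> convex C \<and> (\<forall>l::real. l \<ge> 0 \<longrightarrow> (\<forall>x\<in>C. l *\<^sub>R x \<in> C))
      \<and> C \<inter> uminus ` C = {0}"

definition cone_le :: "'a::real_normed_vector set \<Rightarrow> 'a \<Rightarrow> 'a \<Rightarrow> bool" where
  "cone_le C x y \<longleftrightarrow> y - x \<in> C"

definition normal_cone :: "'a::real_normed_vector set \<Rightarrow> bool" where
  "normal_cone C \<longleftrightarrow> (\<exists>\<kappa>>0. \<forall>x y. cone_le C 0 x \<and> cone_le C x y \<longrightarrow> norm x \<le> \<kappa> * norm y)"

definition order_preserving_on :: "'a::real_normed_vector set \<Rightarrow> 'a set \<Rightarrow> ('a \<Rightarrow> 'a) \<Rightarrow> bool" where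
  "order_preserving_on C D f \<longleftrightarrow> (\<forall>x\<in>D. \<forall>y\<in>D. cone_le C x y \<longrightarrow> cone_le C (f x) (f y))"

definition homogeneous_on :: "'a::real_normed_vector set \<Rightarrow> ('a \<Rightarrow> 'a) \<Rightarrow> bool" where
  "homogeneous_on D f \<longleftrightarrow> (\<forall>x\<in>D. \<forall>t::real. t > 0 \<longrightarrow> f (t *\<^sub>R x) = t *\<^sub>R f x)"

definition Mfun :: "'a::real_normed_vector set \<Rightarrow> 'a \<Rightarrow> 'a \<Rightarrow> real" where
  "Mfun C x y = Inf {\<beta>::real. \<beta> > 0 \<and> cone_le C x (\<beta> *\<^sub>R y)}"

definition mfun :: "'a::real_normed_vector set \<Rightarrow> 'a \<Rightarrow> 'a \<Rightarrow> real" where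
  "mfun C x y = Sup {\<alpha>::real. \<alpha> > 0 \<and> cone_le C (\<alpha> *\<^sub>R y) x}"

definition thompson_metric :: "'a::real_normed_vector set \<Rightarrow> 'a \<Rightarrow> 'a \<Rightarrow> real" where
  "thompson_metric C x y = max (ln (Mfun C x y)) (ln (Mfun C y x))"

definition hilbert_metric :: "'a::real_normed_vector set \<Rightarrow> 'a \<Rightarrow> 'a \<Rightarrow> real" where
  "hilbert_metric C x y = ln (Mfun C x y / mfun C x y)"

text \<open>Cone spectral radius: limsup of the k-th roots of the norms of the iterates,
  evaluated at some (any) interior point; as an extended real.\<close>
definition cone_spectral_radius :: "'a::real_normed_vector set \<Rightarrow> ('a \<Rightarrow> 'a) \<Rightarrow> ereal" where
  "cone_spectral_radius C f =
     (let y = (SOME y. y \<in> interior C) in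
      limsup (\<lambda>k::nat. ereal (norm ((f ^^ k) y) powr (1 / real k))))"

end

theory Submission
  imports Defs
begin

text \<open>
  All four conditions are turned into geometric decay of a nonnegative sequence, and each
  implication comes from an eventual bound \<open>a\<^sub>k \<le> c b\<^sub>k\<close>, which preserves such decay.
  (a)\<open>\<Rightarrow>\<close>(b): \<open>f\<close> is nonexpansive in Hilbert's metric, so \<open>d\<^sub>H(f u, u)\<close> is at most
  \<open>d\<^sub>H(f (f\<^sup>k x), u) + d\<^sub>H(f\<^sup>k x, u) \<rightarrow> 0\<close>, hence \<open>u\<close> is an eigenvector, and its eigenvalue is
  \<open>r\<^sub>C(f)\<close>. Relative to \<open>u\<close>, the ratios \<open>M(f\<^sup>k x/u)/r\<^sup>k\<close> decrease and \<open>m(f\<^sup>k x/u)/r\<^sup>k\<close>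
  increase; any \<open>\<lambda>\<close> between them gives \<open>d\<^sub>T(f\<^sup>k x/r\<^sup>k, \<lambda>u) \<le> d\<^sub>H(f\<^sup>k x, u)\<close>.
  (b)\<open>\<Rightarrow>\<close>(c): by normality, small Thompson distance controls the norm distance linearly.
  (c)\<open>\<Rightarrow>\<close>(d): normalisation is Lipschitz near \<open>\<lambda>u\<close>.
  (d)\<open>\<Rightarrow>\<close>(a): an interior point \<open>u\<close> is an order unit, so near \<open>u\<close> Hilbert's metric is
  bounded by a multiple of the norm distance, and it is invariant under scaling.
\<close>

section \<open>Geometric decay of sequences\<close>

definition decays_at_rate :: "real \<Rightarrow> (nat \<Rightarrow> real) \<Rightarrow> bool" where
  "decays_at_rate \<theta> a \<longleftrightarrow> (\<forall>\<theta>'>\<theta>. eventually (\<lambda>k. a k \<le> \<theta>' ^ k) sequentially)"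

lemma root_le_iff_le_power:
  fixes a t :: real
  assumes "a \<ge> 0" "t > 0" "k \<ge> 1"
  shows "a powr (1 / real k) \<le> t \<longleftrightarrow> a \<le> t ^ k"
proof (cases "a = 0")
  case False
  then have "(a powr (1 / real k)) ^ k = a"
    using assms by (simp add: powr_realpow[symmetric] powr_powr)
  then show ?thesis
    using assms power_mono_iff[of "a powr (1 / real k)" t k] by simp
qed (use assms in simp)

lemma limsup_root_le_iff_decays_at_rate:
  fixes a :: "nat \<Rightarrow> real"
  assumes "\<theta> > 0" and "\<And>k. a k \<ge> 0"
  shows "limsup (\<lambda>k. ereal (a k powr (1 / real k))) \<le> ereal \<theta> \<longleftrightarrow> decays_at_rate \<theta> a"
proof -
  have root_le: "eventually (\<lambda>k. a k powr (1 / real k) \<le> t) sequentially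
      \<longleftrightarrow> eventually (\<lambda>k. a k \<le> t ^ k) sequentially" if "t > 0" for t
    using root_le_iff_le_power[of "a _" t] assms that
    by (intro eventually_cong[OF eventually_ge_at_top[of 1]]) auto
  have "limsup (\<lambda>k. ereal (a k powr (1 / real k))) \<le> ereal \<theta> \<longleftrightarrow>
      (\<forall>t>\<theta>. eventually (\<lambda>k. a k powr (1 / real k) \<le> t) sequentially)"
  proof
    assume L: "limsup (\<lambda>k. ereal (a k powr (1 / real k))) \<le> ereal \<theta>"
    show "\<forall>t>\<theta>. eventually (\<lambda>k. a k powr (1 / real k) \<le> t) sequentially"
    proof (intro allI impI)
      fix t assume "t > \<theta>"
      then have "eventually (\<lambda>k. ereal (a k powr (1 / real k)) < ereal t) sequentially"
        using L unfolding Limsup_le_iff by (metis less_ereal.simps(1))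
      then show "eventually (\<lambda>k. a k powr (1 / real k) \<le> t) sequentially"
        by eventually_elim simp
    qed
  next
    assume le: "\<forall>t>\<theta>. eventually (\<lambda>k. a k powr (1 / real k) \<le> t) sequentially"
    show "limsup (\<lambda>k. ereal (a k powr (1 / real k))) \<le> ereal \<theta>"
      unfolding Limsup_le_iff
    proof (intro allI impI)
      fix y assume "y > ereal \<theta>"
      then obtain t where t: "\<theta> < t" "ereal t < y"
        using ereal_dense2 less_ereal.simps(1) by metis
      from le[rule_format, OF t(1)]
      show "eventually (\<lambda>k. y > ereal (a k powr (1 / real k))) sequentially"
        by eventually_elim (use t(2) in \<open>meson ereal_less_eq(3) order.strict_trans1\<close>)
    qed
  qed
  also have "\<dots> \<longleftrightarrow> decays_at_rate \<theta> a"
    unfolding decays_at_rate_def using root_le assms(1) by auto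
  finally show ?thesis .
qed

lemma decays_at_rate_bigo:
  assumes "decays_at_rate \<theta> a" and "\<theta> > 0" and "c > 0"
    and "eventually (\<lambda>k. b k \<le> c * a k) sequentially"
  shows "decays_at_rate \<theta> b"
  unfolding decays_at_rate_def
proof (intro allI impI)
  fix t assume "t > \<theta>"
  define s where "s = (\<theta> + t) / 2"
  have s: "\<theta> < s" "s < t" "s > 0"
    using \<open>t > \<theta>\<close> \<open>\<theta> > 0\<close> by (auto simp: s_def)
  have "(\<lambda>k. (s / t) ^ k) \<longlonglongrightarrow> 0"
    using s by (intro LIMSEQ_power_zero) auto
  then have "eventually (\<lambda>k. c * (s / t) ^ k \<le> 1) sequentially"
    using \<open>c > 0\<close> by (auto dest: order_tendstoD(2)[of _ _ _ "1 / c"] elim!: eventually_mono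
        simp: field_simps)
  moreover have "eventually (\<lambda>k. a k \<le> s ^ k) sequentially"
    using assms(1) s unfolding decays_at_rate_def by auto
  ultimately show "eventually (\<lambda>k. b k \<le> t ^ k) sequentially"
    using assms(4)
  proof eventually_elim
    case (elim k)
    have "b k \<le> c * s ^ k"
      using elim \<open>c > 0\<close> by (meson mult_left_mono less_le order_trans)
    also have "\<dots> = c * (s / t) ^ k * t ^ k"
      using s by (simp add: power_divide)
    also have "\<dots> \<le> t ^ k"
      using elim s mult_right_mono[of "c * (s / t) ^ k" 1 "t ^ k"] by simp
    finally show ?case .
  qed
qed

lemma decays_at_rate_eventually_le:
  assumes "decays_at_rate \<theta> a" and "\<theta> < 1" and "\<epsilon> > 0"
  shows "eventually (\<lambda>k. a k \<le> \<epsilon>) sequentially"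
proof -
  define s where "s = max ((1 + \<theta>) / 2) 0"
  have "\<theta> < (1 + \<theta>) / 2" "(1 + \<theta>) / 2 < 1"
    using \<open>\<theta> < 1\<close> by simp_all
  then have s: "s > \<theta>" "s < 1" "s \<ge> 0"
    by (auto simp: s_def less_max_iff_disj)
  have "(\<lambda>k. s ^ k) \<longlonglongrightarrow> 0"
    using s by (intro LIMSEQ_power_zero) auto
  then have "eventually (\<lambda>k. s ^ k < \<epsilon>) sequentially"
    using assms by (simp add: order_tendstoD(2))
  moreover have "eventually (\<lambda>k. a k \<le> s ^ k) sequentially"
    using assms(1) s unfolding decays_at_rate_def by auto
  ultimately show ?thesis
    by eventually_elim simp
qed

lemma limsup_root_geometric_bounds:
  fixes s :: "nat \<Rightarrow> real"
  assumes "A > 0" "B > 0" "c > 0" "D > 0"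
    and lower: "\<And>k. A * c ^ k \<le> s k" and upper: "\<And>k. s k \<le> B * D ^ k"
  shows "ereal c \<le> limsup (\<lambda>k. ereal (s k powr (1 / real k)))"
    and "limsup (\<lambda>k. ereal (s k powr (1 / real k))) \<le> ereal D"
proof -
  have root_tendsto: "(\<lambda>k. ereal (X powr (1 / real k) * Y)) \<longlonglongrightarrow> ereal Y" if "X > 0" for X Y :: real
  proof -
    have "(\<lambda>k. X powr (1 / real k)) \<longlonglongrightarrow> X powr 0"
      using that by (intro tendsto_powr tendsto_const lim_1_over_n) auto
    then show ?thesis
      using that tendsto_mult[OF _ tendsto_const[of Y]] by force
  qed
  have root_geometric: "(X * Z ^ k) powr (1 / real k) = X powr (1 / real k) * Z"
    if "X > 0" "Z > 0" "k \<ge> 1" for X Z :: real and k :: nat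
    using that by (simp add: powr_mult powr_realpow[symmetric] powr_powr)
  have "eventually (\<lambda>k. ereal (A powr (1 / real k) * c) \<le> ereal (s k powr (1 / real k))) sequentially"
    using eventually_ge_at_top[of 1]
  proof eventually_elim
    case (elim k)
    then show ?case
      using powr_mono2[of "1 / real k" "A * c ^ k" "s k"] lower[of k] root_geometric[of A c k] assms
      by simp
  qed
  from Limsup_mono[OF this] show "ereal c \<le> limsup (\<lambda>k. ereal (s k powr (1 / real k)))"
    using lim_imp_Limsup[OF trivial_limit_sequentially root_tendsto[OF \<open>A > 0\<close>, of c]] by simp
  have "eventually (\<lambda>k. ereal (s k powr (1 / real k)) \<le> ereal (B powr (1 / real k) * D)) sequentially"
    using eventually_ge_at_top[of 1]
  proof eventually_elim
    case (elim k)
    have "0 \<le> s k"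
      using lower[of k] assms by (smt (verit) mult_pos_pos zero_less_power)
    then show ?case
      using elim powr_mono2[of "1 / real k" "s k" "B * D ^ k"] upper[of k] root_geometric[of B D k] assms
      by simp
  qed
  from Limsup_mono[OF this] show "limsup (\<lambda>k. ereal (s k powr (1 / real k))) \<le> ereal D"
    using lim_imp_Limsup[OF trivial_limit_sequentially root_tendsto[OF \<open>B > 0\<close>, of D]] by simp
qed

lemma norm_normalize_sub_le:
  fixes y u :: "'a::real_normed_vector"
  assumes "norm u = 1" and "l > 0" and close: "norm (y - l *\<^sub>R u) \<le> l / 2"
  shows "norm ((1 / norm y) *\<^sub>R y - u) \<le> (4 / l) * norm (y - l *\<^sub>R u)"
proof -
  define d where "d = norm (y - l *\<^sub>R u)"
  have "\<bar>norm y - l\<bar> \<le> d"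
    using norm_triangle_ineq3[of y "l *\<^sub>R u"] assms by (simp add: d_def)
  then have norm_y: "norm y \<ge> l / 2" and "\<bar>l - norm y\<bar> \<le> d"
    using close by (auto simp: d_def)
  then have "norm y > 0"
    using \<open>l > 0\<close> by linarith
  have "norm (y - norm y *\<^sub>R u) \<le> d + norm ((l - norm y) *\<^sub>R u)"
    using norm_triangle_ineq[of "y - l *\<^sub>R u" "(l - norm y) *\<^sub>R u"]
    by (simp add: d_def algebra_simps)
  also have "\<dots> \<le> 2 * d"
    using \<open>\<bar>l - norm y\<bar> \<le> d\<close> assms by simp
  finally have "norm (y - norm y *\<^sub>R u) \<le> 2 * d" .
  moreover have "(1 / norm y) *\<^sub>R y - u = (1 / norm y) *\<^sub>R (y - norm y *\<^sub>R u)"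
    using \<open>norm y > 0\<close> by (simp add: scaleR_diff_right)
  ultimately have "norm ((1 / norm y) *\<^sub>R y - u) \<le> 2 * d / norm y"
    using norm_y assms by (simp add: divide_right_mono)
  also have "\<dots> \<le> 2 * d / (l / 2)"
    using norm_y \<open>norm y > 0\<close> assms by (intro divide_left_mono) (auto simp: d_def)
  finally show ?thesis
    by (simp add: d_def)
qed

lemma incseq_decseq_common_bound:
  fixes p P :: "nat \<Rightarrow> real"
  assumes "incseq p" "decseq P" "\<And>k. p k \<le> P k"
  obtains l where "\<And>k. p k \<le> l" "\<And>k. l \<le> P k"
proof
  have "p j \<le> P k" for j k
    using assms monoD[of p j "max j k"] antimonoD[of P k "max j k"] assms(3)[of "max j k"]
    unfolding incseq_def decseq_def by (meson max.cobounded1 max.cobounded2 order_trans)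
  then show "p k \<le> Inf (range P)" "Inf (range P) \<le> P k" for k
    by (auto intro!: cInf_greatest cInf_lower bdd_belowI[of _ "p 0"])
qed

section \<open>Closed cones, Thompson's and Hilbert's metrics\<close>

lemma closed_cone_neq_UNIV:
  fixes C :: "'a::real_normed_vector set" and v :: 'a
  assumes "closed_cone C" "v \<noteq> 0"
  shows "C \<noteq> UNIV"
proof
  assume "C = UNIV"
  then have "v \<in> C \<inter> uminus ` C"
    using image_eqI[of v uminus "- v"] by simp
  then show False
    using assms unfolding closed_cone_def by auto
qed

text \<open>\<open>C \<noteq> UNIV\<close> only excludes the zero space, where \<open>0\<close> would be an interior point.\<close>
locale ordered_cone =
  fixes C :: "'a::real_normed_vector set"
  assumes closed_cone: "closed_cone C" and cone_neq_UNIV: "C \<noteq> UNIV"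
begin

lemma cone_closed: "closed C"
  and scaleR_mem: "l \<ge> 0 \<Longrightarrow> x \<in> C \<Longrightarrow> l *\<^sub>R x \<in> C"
  using closed_cone unfolding closed_cone_def by auto

lemma zero_mem: "0 \<in> C"
  using closed_cone unfolding closed_cone_def by auto

lemma neg_mem_imp_zero: "x \<in> C \<Longrightarrow> - x \<in> C \<Longrightarrow> x = 0"
  using closed_cone unfolding closed_cone_def by (metis IntI image_eqI minus_minus singletonD)

lemma add_mem: assumes "x \<in> C" "y \<in> C" shows "x + y \<in> C"
proof -
  have "(1/2) *\<^sub>R x + (1/2) *\<^sub>R y \<in> C"
    using closed_cone assms unfolding closed_cone_def convex_def by auto
  then show ?thesis
    using scaleR_mem[of 2] by (force simp: scaleR_add_right)
qed

lemma cone_le_refl: "cone_le C x x"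
  by (simp add: cone_le_def zero_mem)

lemma cone_le_trans: "cone_le C x y \<Longrightarrow> cone_le C y z \<Longrightarrow> cone_le C x z"
  unfolding cone_le_def using add_mem[of "y - x" "z - y"] by simp

lemma cone_le_antisym: "cone_le C x y \<Longrightarrow> cone_le C y x \<Longrightarrow> x = y"
  unfolding cone_le_def using neg_mem_imp_zero[of "y - x"] by simp

lemma cone_le_scaleR: "t \<ge> 0 \<Longrightarrow> cone_le C x y \<Longrightarrow> cone_le C (t *\<^sub>R x) (t *\<^sub>R y)"
  unfolding cone_le_def using scaleR_mem[of t "y - x"] by (simp add: scaleR_diff_right)

lemma cone_le_scaleR_left_mono: "z \<in> C \<Longrightarrow> s \<le> t \<Longrightarrow> cone_le C (s *\<^sub>R z) (t *\<^sub>R z)"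
  unfolding cone_le_def using scaleR_mem[of "t - s" z] by (simp add: scaleR_diff_left)

lemma cone_le_scaleR_imp_le:
  assumes "w \<in> C" "w \<noteq> 0" and "cone_le C (a *\<^sub>R w) (b *\<^sub>R w)"
  shows "a \<le> b"
proof (rule ccontr)
  assume "\<not> a \<le> b"
  have ba: "(b - a) *\<^sub>R w \<in> C"
    using assms(3) by (simp add: cone_le_def scaleR_diff_left)
  have "(1 / (a - b)) *\<^sub>R ((b - a) *\<^sub>R w) \<in> C"
    by (rule scaleR_mem[OF _ ba]) (use \<open>\<not> a \<le> b\<close> in simp)
  moreover have "(b - a) / (a - b) = -1"
    using \<open>\<not> a \<le> b\<close> by (simp add: field_simps)
  then have "(1 / (a - b)) *\<^sub>R ((b - a) *\<^sub>R w) = - w"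
    by simp
  ultimately have "- w \<in> C"
    by simp
  then show False
    using neg_mem_imp_zero[of w] assms(1,2) by simp
qed

lemma interior_nonzero:
  assumes "y \<in> interior C" shows "y \<noteq> 0"
proof
  assume "y = 0"
  then obtain e where "e > 0" "ball 0 e \<subseteq> C"
    using assms mem_interior by blast
  have "v \<in> C" for v
  proof (cases "v = 0")
    case False
    define t where "t = e / (2 * norm v)"
    have "t > 0"
      using \<open>e > 0\<close> False by (simp add: t_def)
    then have "t *\<^sub>R v \<in> C"
      using \<open>ball 0 e \<subseteq> C\<close> \<open>e > 0\<close> by (auto simp: t_def)
    then show "v \<in> C"
      using scaleR_mem[of "1 / t" "t *\<^sub>R v"] \<open>t > 0\<close> by simp
  qed (simp add: zero_mem)
  then show False
    using cone_neq_UNIV by blast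
qed

lemma scaleR_interior:
  assumes "t > 0" "y \<in> interior C" shows "t *\<^sub>R y \<in> interior C"
proof -
  have "open ((*\<^sub>R) t ` interior C)"
    using assms(1) by (intro open_scaling) auto
  moreover have "(*\<^sub>R) t ` interior C \<subseteq> C"
    using assms(1) scaleR_mem interior_subset[of C] by auto
  ultimately have "(*\<^sub>R) t ` interior C \<subseteq> interior C"
    by (rule interior_maximal[rotated])
  then show ?thesis
    using assms(2) by blast
qed

lemma interior_order_unit:
  assumes "z \<in> interior C"
  obtains \<rho> where "\<rho> > 0" "\<And>w. cone_le C w ((norm w / \<rho>) *\<^sub>R z)"
proof -
  obtain e where "e > 0" "ball z e \<subseteq> C"
    using assms mem_interior by blast
  have "(norm w / (e / 2)) *\<^sub>R z - w \<in> C" for w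
  proof (cases "w = 0")
    case False
    define t where "t = norm w / (e / 2)"
    have "t > 0"
      using False \<open>e > 0\<close> by (simp add: t_def)
    have "z - (1 / t) *\<^sub>R w \<in> ball z e"
      using False \<open>e > 0\<close> by (simp add: t_def dist_norm)
    then have "t *\<^sub>R (z - (1 / t) *\<^sub>R w) \<in> C"
      using \<open>ball z e \<subseteq> C\<close> \<open>t > 0\<close> by (intro scaleR_mem) auto
    moreover have "t *\<^sub>R (z - (1 / t) *\<^sub>R w) = t *\<^sub>R z - w"
      using \<open>t > 0\<close> by (simp add: scaleR_diff_right)
    ultimately show ?thesis
      by (simp add: t_def)
  qed (simp add: zero_mem)
  then show ?thesis
    using that[of "e / 2"] \<open>e > 0\<close> by (simp add: cone_le_def)
qed

lemma exists_cone_le_scaleR: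
  assumes "y \<in> interior C" "z \<in> interior C"
  obtains \<beta> where "\<beta> > 0" "cone_le C y (\<beta> *\<^sub>R z)"
proof -
  obtain \<rho> where "\<rho> > 0" "cone_le C y ((norm y / \<rho>) *\<^sub>R z)"
    using interior_order_unit[OF assms(2)] by metis
  moreover have "cone_le C ((norm y / \<rho>) *\<^sub>R z) ((norm y / \<rho> + 1) *\<^sub>R z)"
    by (intro cone_le_scaleR_left_mono) (use assms(2) interior_subset in auto)
  ultimately show ?thesis
    using that[of "norm y / \<rho> + 1"] cone_le_trans by (simp add: add_nonneg_pos)
qed

lemma
  assumes y: "y \<in> interior C" and z: "z \<in> interior C"
  shows Mfun_pos: "Mfun C y z > 0"
    and cone_le_Mfun: "cone_le C y (Mfun C y z *\<^sub>R z)"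
    and Mfun_le: "\<And>\<beta>. \<beta> > 0 \<Longrightarrow> cone_le C y (\<beta> *\<^sub>R z) \<Longrightarrow> Mfun C y z \<le> \<beta>"
proof -
  define S where "S = {\<beta>::real. \<beta> > 0 \<and> cone_le C y (\<beta> *\<^sub>R z)}"
  have M: "Mfun C y z = Inf S"
    by (simp add: Mfun_def S_def)
  have "S \<noteq> {}"
    using exists_cone_le_scaleR[OF y z] unfolding S_def by blast
  have "bdd_below S"
    unfolding S_def by (rule bdd_belowI[of _ 0]) auto
  then show "\<And>\<beta>. \<beta> > 0 \<Longrightarrow> cone_le C y (\<beta> *\<^sub>R z) \<Longrightarrow> Mfun C y z \<le> \<beta>"
    unfolding M by (intro cInf_lower) (auto simp: S_def)
  have "closed ((\<lambda>\<beta>::real. \<beta> *\<^sub>R z - y) -` C)"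
    by (intro continuous_closed_vimage cone_closed continuous_intros)
  then have "closure S \<subseteq> (\<lambda>\<beta>. \<beta> *\<^sub>R z - y) -` C"
    by (intro closure_minimal) (auto simp: S_def cone_le_def)
  with closure_contains_Inf[OF \<open>S \<noteq> {}\<close> \<open>bdd_below S\<close>]
  have attained: "Mfun C y z *\<^sub>R z - y \<in> C"
    unfolding M by blast
  then show "cone_le C y (Mfun C y z *\<^sub>R z)"
    by (simp add: cone_le_def)
  have "Mfun C y z \<ge> 0"
    unfolding M using \<open>S \<noteq> {}\<close> by (intro cInf_greatest) (auto simp: S_def)
  moreover have "Mfun C y z \<noteq> 0"
    using attained neg_mem_imp_zero[of y] interior_subset[of C] interior_nonzero[OF y] y by auto
  ultimately show "Mfun C y z > 0"
    by simp
qed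

lemma
  assumes y: "y \<in> interior C" and z: "z \<in> interior C"
  shows mfun_pos: "mfun C y z > 0"
    and cone_le_mfun: "cone_le C (mfun C y z *\<^sub>R z) y"
    and mfun_ge: "\<And>\<alpha>. \<alpha> > 0 \<Longrightarrow> cone_le C (\<alpha> *\<^sub>R z) y \<Longrightarrow> \<alpha> \<le> mfun C y z"
proof -
  define S where "S = {\<alpha>::real. \<alpha> > 0 \<and> cone_le C (\<alpha> *\<^sub>R z) y}"
  have m: "mfun C y z = Sup S"
    by (simp add: mfun_def S_def)
  obtain \<beta> where "\<beta> > 0" "cone_le C z (\<beta> *\<^sub>R y)"
    using exists_cone_le_scaleR[OF z y] .
  then have "1 / \<beta> \<in> S"
    using cone_le_scaleR[of "1 / \<beta>" z "\<beta> *\<^sub>R y"] by (simp add: S_def)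
  then have "S \<noteq> {}"
    by blast
  obtain \<gamma> where "\<gamma> > 0" "cone_le C y (\<gamma> *\<^sub>R z)"
    using exists_cone_le_scaleR[OF y z] .
  then have "bdd_above S"
    using cone_le_trans cone_le_scaleR_imp_le interior_subset z interior_nonzero
    unfolding S_def by (intro bdd_aboveI[of _ \<gamma>]) blast
  then show "\<And>\<alpha>. \<alpha> > 0 \<Longrightarrow> cone_le C (\<alpha> *\<^sub>R z) y \<Longrightarrow> \<alpha> \<le> mfun C y z"
    unfolding m by (intro cSup_upper) (auto simp: S_def)
  then have "1 / \<beta> \<le> mfun C y z"
    using \<open>1 / \<beta> \<in> S\<close> unfolding S_def by blast
  then show "mfun C y z > 0"
    using \<open>\<beta> > 0\<close> by (smt (verit) divide_pos_pos)
  have "closed ((\<lambda>\<alpha>::real. y - \<alpha> *\<^sub>R z) -` C)"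
    by (intro continuous_closed_vimage cone_closed continuous_intros)
  then have "closure S \<subseteq> (\<lambda>\<alpha>. y - \<alpha> *\<^sub>R z) -` C"
    by (intro closure_minimal) (auto simp: S_def cone_le_def)
  with closure_contains_Sup[OF \<open>S \<noteq> {}\<close> \<open>bdd_above S\<close>]
  show "cone_le C (mfun C y z *\<^sub>R z) y"
    unfolding m by (auto simp: cone_le_def)
qed


lemma mfun_le_Mfun:
  assumes "y \<in> interior C" "z \<in> interior C"
  shows "mfun C y z \<le> Mfun C y z"
  using cone_le_trans[OF cone_le_mfun cone_le_Mfun] cone_le_scaleR_imp_le assms
    interior_subset interior_nonzero by blast

lemma Mfun_scaleR:
  assumes "t > 0" "y \<in> interior C" "z \<in> interior C"
  shows "Mfun C (t *\<^sub>R y) z = t * Mfun C y z"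
proof (rule antisym)
  have ty: "t *\<^sub>R y \<in> interior C"
    using assms scaleR_interior by blast
  show "Mfun C (t *\<^sub>R y) z \<le> t * Mfun C y z"
    using Mfun_le[OF ty assms(3)] cone_le_scaleR[OF _ cone_le_Mfun[OF assms(2,3)], of t]
      Mfun_pos[OF assms(2,3)] assms(1) by simp
  have "cone_le C y ((Mfun C (t *\<^sub>R y) z / t) *\<^sub>R z)"
    using cone_le_scaleR[OF _ cone_le_Mfun[OF ty assms(3)], of "1 / t"] assms(1) by simp
  then have "Mfun C y z \<le> Mfun C (t *\<^sub>R y) z / t"
    using Mfun_le[OF assms(2,3)] Mfun_pos[OF ty assms(3)] assms(1) by simp
  then show "t * Mfun C y z \<le> Mfun C (t *\<^sub>R y) z"
    using assms(1) by (simp add: field_simps)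
qed

lemma mfun_scaleR:
  assumes "t > 0" "y \<in> interior C" "z \<in> interior C"
  shows "mfun C (t *\<^sub>R y) z = t * mfun C y z"
proof (rule antisym)
  have ty: "t *\<^sub>R y \<in> interior C"
    using assms scaleR_interior by blast
  show "t * mfun C y z \<le> mfun C (t *\<^sub>R y) z"
    using mfun_ge[OF ty assms(3)] cone_le_scaleR[OF _ cone_le_mfun[OF assms(2,3)], of t]
      mfun_pos[OF assms(2,3)] assms(1) by simp
  have "cone_le C ((mfun C (t *\<^sub>R y) z / t) *\<^sub>R z) y"
    using cone_le_scaleR[OF _ cone_le_mfun[OF ty assms(3)], of "1 / t"] assms(1) by simp
  then have "mfun C (t *\<^sub>R y) z / t \<le> mfun C y z"
    using mfun_ge[OF assms(2,3)] mfun_pos[OF ty assms(3)] assms(1) by simp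
  then show "mfun C (t *\<^sub>R y) z \<le> t * mfun C y z"
    using assms(1) by (simp add: field_simps)
qed

lemma hilbert_metric_scaleR:
  assumes "t > 0" "y \<in> interior C" "z \<in> interior C"
  shows "hilbert_metric C (t *\<^sub>R y) z = hilbert_metric C y z"
  using assms by (simp add: hilbert_metric_def Mfun_scaleR mfun_scaleR)

lemma hilbert_metric_nonneg:
  assumes "y \<in> interior C" "z \<in> interior C"
  shows "hilbert_metric C y z \<ge> 0"
  using mfun_le_Mfun[OF assms] mfun_pos[OF assms] by (simp add: hilbert_metric_def)

lemma hilbert_metric_le:
  assumes "y \<in> interior C" "z \<in> interior C"
    and "\<alpha> > 0" "cone_le C (\<alpha> *\<^sub>R z) y" "cone_le C y (\<beta> *\<^sub>R z)"
  shows "hilbert_metric C y z \<le> ln (\<beta> / \<alpha>)"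
proof -
  have "\<alpha> \<le> \<beta>"
    using cone_le_scaleR_imp_le[OF _ _ cone_le_trans[OF assms(4,5)]] assms(2)
      interior_subset interior_nonzero by blast
  then have "Mfun C y z / mfun C y z \<le> \<beta> / \<alpha>"
    using assms Mfun_le[OF assms(1,2)] mfun_ge[OF assms(1,2)] Mfun_pos[OF assms(1,2)]
    by (intro frac_le) auto
  moreover have "Mfun C y z / mfun C y z > 0"
    using Mfun_pos[OF assms(1,2)] mfun_pos[OF assms(1,2)] by simp
  ultimately show ?thesis
    unfolding hilbert_metric_def by simp
qed

lemma hilbert_metric_le_zero_imp_proportional:
  assumes "y \<in> interior C" "z \<in> interior C" "hilbert_metric C y z \<le> 0"
  shows "y = Mfun C y z *\<^sub>R z"
proof -
  have "Mfun C y z \<le> mfun C y z"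
    using assms Mfun_pos[OF assms(1,2)] mfun_pos[OF assms(1,2)]
    by (simp add: hilbert_metric_def divide_le_eq)
  then have "cone_le C (Mfun C y z *\<^sub>R z) y"
    using cone_le_trans[OF cone_le_scaleR_left_mono cone_le_mfun[OF assms(1,2)]]
      assms(2) interior_subset by blast
  then show ?thesis
    using cone_le_antisym cone_le_Mfun[OF assms(1,2)] by blast
qed

lemma thompson_metric_nonneg:
  assumes "y \<in> interior C" "z \<in> interior C"
  shows "thompson_metric C y z \<ge> 0"
proof -
  have "cone_le C (Mfun C y z *\<^sub>R z) ((Mfun C y z * Mfun C z y) *\<^sub>R y)"
    using cone_le_scaleR[OF _ cone_le_Mfun[OF assms(2,1)]] Mfun_pos[OF assms] by simp
  then have "cone_le C (1 *\<^sub>R y) ((Mfun C y z * Mfun C z y) *\<^sub>R y)"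
    using cone_le_Mfun[OF assms] cone_le_trans by simp
  then have "1 \<le> Mfun C y z * Mfun C z y"
    using cone_le_scaleR_imp_le assms(1) interior_subset interior_nonzero by blast
  then have "0 \<le> ln (Mfun C y z * Mfun C z y)"
    by simp
  then have "0 \<le> ln (Mfun C y z) + ln (Mfun C z y)"
    using Mfun_pos[OF assms] Mfun_pos[OF assms(2,1)] by (simp add: ln_mult)
  then show ?thesis
    unfolding thompson_metric_def by linarith
qed

lemma thompson_metric_le:
  assumes "y \<in> interior C" "z \<in> interior C"
    and "\<beta> > 0" "cone_le C y (\<beta> *\<^sub>R z)" "cone_le C z (\<beta> *\<^sub>R y)"
  shows "thompson_metric C y z \<le> ln \<beta>"
  using Mfun_le[OF assms(1,2)] Mfun_le[OF assms(2,1)] Mfun_pos[OF assms(1,2)]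
    Mfun_pos[OF assms(2,1)] assms(3-)
  unfolding thompson_metric_def by simp

lemma cone_le_exp_thompson_metric:
  assumes "y \<in> interior C" "z \<in> interior C"
  shows "cone_le C y (exp (thompson_metric C y z) *\<^sub>R z)"
proof -
  have "Mfun C y z \<le> exp (thompson_metric C y z)"
    using Mfun_pos[OF assms] unfolding thompson_metric_def
    by (metis exp_le_cancel_iff exp_ln max.cobounded1)
  then show ?thesis
    using cone_le_trans[OF cone_le_Mfun[OF assms] cone_le_scaleR_left_mono]
      assms(2) interior_subset by blast
qed

lemma thompson_metric_commute: "thompson_metric C y z = thompson_metric C z y"
  by (simp add: thompson_metric_def max.commute)

lemma thompson_metric_le_of_bounds:
  assumes "y \<in> interior C" "z \<in> interior C"
    and "a > 0" "a \<le> l" "l \<le> b" "cone_le C (a *\<^sub>R z) y" "cone_le C y (b *\<^sub>R z)"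
  shows "thompson_metric C y (l *\<^sub>R z) \<le> ln (b / a)"
proof (rule thompson_metric_le)
  show "l *\<^sub>R z \<in> interior C"
    using assms scaleR_interior by simp
  have "b \<le> (b / a) * l"
    using assms by (simp add: field_simps mult_left_mono)
  then show "cone_le C y ((b / a) *\<^sub>R l *\<^sub>R z)"
    using cone_le_trans[OF assms(7) cone_le_scaleR_left_mono] assms(2) interior_subset by auto
  have "cone_le C ((l / a) *\<^sub>R a *\<^sub>R z) ((l / a) *\<^sub>R y)"
    using cone_le_scaleR[OF _ assms(6), of "l / a"] assms by simp
  moreover have "l / a \<le> b / a"
    using assms by (simp add: divide_right_mono)
  ultimately show "cone_le C (l *\<^sub>R z) ((b / a) *\<^sub>R y)"
    using cone_le_trans[OF _ cone_le_scaleR_left_mono] assms(1,3) interior_subset by fastforce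
qed (use assms in auto)

lemma hilbert_metric_le_norm_diff:
  assumes "z \<in> interior C"
  obtains \<rho> where "\<rho> > 0"
    "\<And>y. y \<in> interior C \<Longrightarrow> norm (y - z) \<le> \<rho> / 2 \<Longrightarrow> hilbert_metric C y z \<le> (4 / \<rho>) * norm (y - z)"
proof -
  obtain \<rho> where "\<rho> > 0" and unit: "\<And>w. cone_le C w ((norm w / \<rho>) *\<^sub>R z)"
    using interior_order_unit[OF assms] by metis
  have "hilbert_metric C y z \<le> (4 / \<rho>) * norm (y - z)"
    if y: "y \<in> interior C" and close: "norm (y - z) \<le> \<rho> / 2" for y
  proof -
    define t where "t = norm (y - z) / \<rho>"
    have t: "0 \<le> t" "t \<le> 1 / 2"
      using close \<open>\<rho> > 0\<close> by (auto simp: t_def divide_simps)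
    have "cone_le C y ((1 + t) *\<^sub>R z)"
      using unit[of "y - z"] by (simp add: t_def cone_le_def algebra_simps)
    moreover have "cone_le C ((1 - t) *\<^sub>R z) y"
      using unit[of "z - y"] by (simp add: t_def cone_le_def norm_minus_commute algebra_simps)
    ultimately have "hilbert_metric C y z \<le> ln ((1 + t) / (1 - t))"
      using t by (intro hilbert_metric_le[OF y assms]) auto
    also have "\<dots> \<le> (1 + t) / (1 - t) - 1"
      using t by (intro ln_le_minus_one) auto
    also have "\<dots> = 2 * t / (1 - t)"
      using t by (simp add: field_simps)
    also have "\<dots> \<le> 4 * t"
      using t mult_left_mono[of "2 * t" 1 t] by (simp add: field_simps)
    finally show ?thesis
      by (simp add: t_def)
  qed
  with \<open>\<rho> > 0\<close> show ?thesis
    using that by blast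
qed

end

locale normal_ordered_cone = ordered_cone +
  fixes \<kappa> :: real
  assumes normal_const_pos: "\<kappa> > 0"
    and normal: "cone_le C 0 x \<Longrightarrow> cone_le C x y \<Longrightarrow> norm x \<le> \<kappa> * norm y"
begin

lemma norm_le_of_cone_le_abs:
  assumes "cone_le C w a" "cone_le C (- w) a"
  shows "norm w \<le> (2 * \<kappa> + 1) * norm a"
proof -
  have "cone_le C 0 (w + a)" "cone_le C (w + a) (2 *\<^sub>R a)"
    using assms by (auto simp: cone_le_def scaleR_2 algebra_simps)
  then have "norm (w + a) \<le> 2 * \<kappa> * norm a"
    using normal by fastforce
  then show ?thesis
    using norm_triangle_ineq4[of "w + a" a] by (simp add: algebra_simps)
qed

lemma norm_diff_le_thompson_metric:
  assumes y: "y \<in> interior C" and z: "z \<in> interior C" and small: "thompson_metric C y z \<le> 1 / 2"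
  shows "norm (y - z) \<le> (2 * (2 * \<kappa> + 1) * norm z) * thompson_metric C y z"
proof -
  define \<delta> where "\<delta> = thompson_metric C y z"
  have \<delta>: "0 \<le> \<delta>" "\<delta> \<le> 1 / 2"
    using thompson_metric_nonneg[OF y z] small by (auto simp: \<delta>_def)
  have above: "cone_le C y (exp \<delta> *\<^sub>R z)"
    using cone_le_exp_thompson_metric[OF y z] by (simp add: \<delta>_def)
  have "cone_le C (exp (- \<delta>) *\<^sub>R z) (exp (- \<delta>) *\<^sub>R exp \<delta> *\<^sub>R y)"
    using cone_le_scaleR[OF _ cone_le_exp_thompson_metric[OF z y]]
    by (simp add: \<delta>_def thompson_metric_commute)
  then have below: "cone_le C (exp (- \<delta>) *\<^sub>R z) y"
    by (simp add: exp_minus)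
  have "1 - exp (- \<delta>) \<le> exp \<delta> - 1"
    using \<delta> exp_ge_add_one_self[of "- \<delta>"] exp_ge_add_one_self[of \<delta>] by linarith
  then have "cone_le C ((1 - exp (- \<delta>)) *\<^sub>R z) ((exp \<delta> - 1) *\<^sub>R z)"
    using cone_le_scaleR_left_mono z interior_subset by blast
  moreover have "cone_le C (- (y - z)) ((1 - exp (- \<delta>)) *\<^sub>R z)"
    using below by (simp add: cone_le_def algebra_simps)
  ultimately have down: "cone_le C (- (y - z)) ((exp \<delta> - 1) *\<^sub>R z)"
    using cone_le_trans by blast
  have up: "cone_le C (y - z) ((exp \<delta> - 1) *\<^sub>R z)"
    using above by (simp add: cone_le_def algebra_simps)
  have "norm (y - z) \<le> (2 * \<kappa> + 1) * norm ((exp \<delta> - 1) *\<^sub>R z)"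
    using norm_le_of_cone_le_abs[OF up down] .
  also have "\<dots> = (2 * \<kappa> + 1) * ((exp \<delta> - 1) * norm z)"
    using \<delta> by simp
  also have "\<dots> \<le> (2 * \<kappa> + 1) * ((2 * \<delta>) * norm z)"
    using exp_bound_lemma[of \<delta>] \<delta> normal_const_pos
    by (intro mult_left_mono mult_right_mono) auto
  finally show ?thesis
    by (simp add: \<delta>_def algebra_simps)
qed

end

section \<open>Order-preserving homogeneous maps\<close>

locale cone_map = ordered_cone +
  fixes f :: "'a::real_normed_vector \<Rightarrow> 'a"
  assumes maps_interior: "f ` interior C \<subseteq> interior C"
    and order_preserving: "order_preserving_on C (interior C) f"
    and homogeneous: "homogeneous_on (interior C) f"
begin

lemma f_mono: "y \<in> interior C \<Longrightarrow> z \<in> interior C \<Longrightarrow> cone_le C y z \<Longrightarrow> cone_le C (f y) (f z)"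
  using order_preserving unfolding order_preserving_on_def by blast

lemma f_scaleR: "y \<in> interior C \<Longrightarrow> t > 0 \<Longrightarrow> f (t *\<^sub>R y) = t *\<^sub>R f y"
  using homogeneous unfolding homogeneous_on_def by blast

lemma iter_interior: "y \<in> interior C \<Longrightarrow> (f ^^ k) y \<in> interior C"
  using maps_interior by (induction k) auto

lemma iter_scaleR: "y \<in> interior C \<Longrightarrow> t > 0 \<Longrightarrow> (f ^^ k) (t *\<^sub>R y) = t *\<^sub>R (f ^^ k) y"
  by (induction k) (auto simp: f_scaleR iter_interior)

lemma iter_mono:
  "y \<in> interior C \<Longrightarrow> z \<in> interior C \<Longrightarrow> cone_le C y z \<Longrightarrow> cone_le C ((f ^^ k) y) ((f ^^ k) z)"
  by (induction k) (auto intro: f_mono iter_interior)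

lemma cone_le_scaleR_image:
  assumes "y \<in> interior C" "z \<in> interior C" "t > 0"
  shows "cone_le C y (t *\<^sub>R z) \<Longrightarrow> cone_le C (f y) (t *\<^sub>R f z)"
    and "cone_le C (t *\<^sub>R z) y \<Longrightarrow> cone_le C (t *\<^sub>R f z) (f y)"
  using f_mono[OF assms(1) scaleR_interior[OF assms(3,2)]]
    f_mono[OF scaleR_interior[OF assms(3,2)] assms(1)] f_scaleR[OF assms(2,3)] by simp_all


lemma iter_cone_le_power:
  assumes "z \<in> interior C" "c > 0"
  shows "cone_le C (c *\<^sub>R z) (f z) \<Longrightarrow> cone_le C ((c ^ k) *\<^sub>R z) ((f ^^ k) z)"
    and "cone_le C (f z) (c *\<^sub>R z) \<Longrightarrow> cone_le C ((f ^^ k) z) ((c ^ k) *\<^sub>R z)"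
proof (induction k)
  case (Suc k)
  have ck: "c ^ k > 0"
    using assms(2) by simp
  { case 1
    have "cone_le C ((c ^ k) *\<^sub>R c *\<^sub>R z) ((c ^ k) *\<^sub>R f z)"
      using cone_le_scaleR[OF _ "1"] ck by simp
    moreover have "cone_le C ((c ^ k) *\<^sub>R f z) (f ((f ^^ k) z))"
      using cone_le_scaleR_image(2)[OF iter_interior assms(1) ck] Suc.IH(1)[OF "1"] assms by simp
    ultimately show ?case
      using cone_le_trans by (simp add: mult.commute) }
  { case 2
    have "cone_le C (f ((f ^^ k) z)) ((c ^ k) *\<^sub>R f z)"
      using cone_le_scaleR_image(1)[OF iter_interior assms(1) ck] Suc.IH(2)[OF "2"] assms by simp
    moreover have "cone_le C ((c ^ k) *\<^sub>R f z) ((c ^ k) *\<^sub>R c *\<^sub>R z)"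
      using cone_le_scaleR[OF _ "2"] ck by simp
    ultimately show ?case
      using cone_le_trans by (simp add: mult.commute) }
qed (simp_all add: cone_le_refl)

text \<open>Nonexpansiveness of \<open>f\<close> in Hilbert's metric combined with the triangle inequality
  through \<open>f y\<close>.\<close>
lemma hilbert_metric_image_le:
  assumes y: "y \<in> interior C" and z: "z \<in> interior C"
  shows "hilbert_metric C (f z) z \<le> hilbert_metric C (f y) z + hilbert_metric C y z"
proof -
  have fy: "f y \<in> interior C" and fz: "f z \<in> interior C"
    using maps_interior y z by auto
  define M where "M = Mfun C y z"
  define m where "m = mfun C y z"
  define M' where "M' = Mfun C (f y) z"
  define m' where "m' = mfun C (f y) z"
  have pos: "M > 0" "m > 0" "M' > 0" "m' > 0"
    using Mfun_pos mfun_pos y z fy unfolding M_def m_def M'_def m'_def by auto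
  have "cone_le C (m *\<^sub>R f z) (M' *\<^sub>R z)"
    using cone_le_trans[OF cone_le_scaleR_image(2)[OF y z _ cone_le_mfun[OF y z]] cone_le_Mfun[OF fy z]]
      pos unfolding m_def M'_def by simp
  from cone_le_scaleR[OF _ this, of "1 / m"]
  have upper: "cone_le C (f z) ((M' / m) *\<^sub>R z)"
    using pos by simp
  have "cone_le C (m' *\<^sub>R z) (M *\<^sub>R f z)"
    using cone_le_trans[OF cone_le_mfun[OF fy z] cone_le_scaleR_image(1)[OF y z _ cone_le_Mfun[OF y z]]]
      pos unfolding M_def m'_def by simp
  from cone_le_scaleR[OF _ this, of "1 / M"]
  have lower: "cone_le C ((m' / M) *\<^sub>R z) (f z)"
    using pos by simp
  have "hilbert_metric C (f z) z \<le> ln ((M' / m) / (m' / M))"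
    using hilbert_metric_le[OF fz z _ lower upper] pos by simp
  also have "\<dots> = ln ((M' / m') * (M / m))"
    using pos by (simp add: field_simps)
  also have "\<dots> = ln (M' / m') + ln (M / m)"
    using pos by (intro ln_mult_pos) auto
  finally show ?thesis
    by (simp add: hilbert_metric_def M_def m_def M'_def m'_def)
qed

lemma eigenvector_of_hilbert_approx:
  assumes z: "z \<in> interior C"
    and approx: "\<And>\<epsilon>. \<epsilon> > 0 \<Longrightarrow> \<exists>y\<in>interior C. hilbert_metric C y z \<le> \<epsilon> \<and> hilbert_metric C (f y) z \<le> \<epsilon>"
  shows "f z = Mfun C (f z) z *\<^sub>R z"
proof (rule hilbert_metric_le_zero_imp_proportional)
  show "f z \<in> interior C"
    using maps_interior z by auto
  show "hilbert_metric C (f z) z \<le> 0"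
  proof (rule field_le_epsilon)
    fix \<epsilon> :: real assume "\<epsilon> > 0"
    then obtain y where "y \<in> interior C" "hilbert_metric C y z \<le> \<epsilon> / 2" "hilbert_metric C (f y) z \<le> \<epsilon> / 2"
      using approx[of "\<epsilon> / 2"] by auto
    then show "hilbert_metric C (f z) z \<le> 0 + \<epsilon>"
      using hilbert_metric_image_le[OF _ z, of y] by simp
  qed
qed (rule z)

lemma
  assumes y: "y \<in> interior C" and z: "z \<in> interior C" and eig: "f z = \<mu> *\<^sub>R z" "\<mu> > 0"
  shows Mfun_image_le_eigenvector: "Mfun C (f y) z \<le> \<mu> * Mfun C y z"
    and mfun_image_ge_eigenvector: "\<mu> * mfun C y z \<le> mfun C (f y) z"
proof -
  have fy: "f y \<in> interior C"
    using maps_interior y by auto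
  show "Mfun C (f y) z \<le> \<mu> * Mfun C y z"
    using Mfun_le[OF fy z] cone_le_scaleR_image(1)[OF y z Mfun_pos[OF y z] cone_le_Mfun[OF y z]]
      Mfun_pos[OF y z] eig by (simp add: mult.commute)
  show "\<mu> * mfun C y z \<le> mfun C (f y) z"
    using mfun_ge[OF fy z] cone_le_scaleR_image(2)[OF y z mfun_pos[OF y z] cone_le_mfun[OF y z]]
      mfun_pos[OF y z] eig by (simp add: mult.commute)
qed

text \<open>Along \<open>w k = f\<^sup>k y / \<mu>\<^sup>k\<close> the upper bounds \<open>M(w k / z)\<close> decrease and the lower
  bounds \<open>m(w k / z)\<close> increase, so a single multiple \<open>l z\<close> lies between all of them.\<close>
lemma thompson_metric_normalized_iterate_le:
  assumes y: "y \<in> interior C" and z: "z \<in> interior C" and eig: "f z = \<mu> *\<^sub>R z" "\<mu> > 0"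
  obtains l where "l > 0"
    "\<And>k. thompson_metric C ((1 / \<mu> ^ k) *\<^sub>R (f ^^ k) y) (l *\<^sub>R z) \<le> hilbert_metric C ((f ^^ k) y) z"
proof -
  define w where "w k = (1 / \<mu> ^ k) *\<^sub>R (f ^^ k) y" for k
  note Y = iter_interior[OF y]
  have w: "w k \<in> interior C" for k
    using scaleR_interior[OF _ Y] eig(2) by (simp add: w_def)
  have Mw: "Mfun C (w k) z = Mfun C ((f ^^ k) y) z / \<mu> ^ k" for k
    using Mfun_scaleR[OF _ Y z] eig(2) by (simp add: w_def)
  have mw: "mfun C (w k) z = mfun C ((f ^^ k) y) z / \<mu> ^ k" for k
    using mfun_scaleR[OF _ Y z] eig(2) by (simp add: w_def)
  have "decseq (\<lambda>k. Mfun C (w k) z)"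
  proof (rule decseq_SucI)
    fix k
    have "Mfun C ((f ^^ Suc k) y) z / \<mu> ^ Suc k \<le> (\<mu> * Mfun C ((f ^^ k) y) z) / \<mu> ^ Suc k"
      using Mfun_image_le_eigenvector[OF Y z eig, of k] eig(2) by (intro divide_right_mono) auto
    then show "Mfun C (w (Suc k)) z \<le> Mfun C (w k) z"
      using eig(2) by (simp add: Mw)
  qed
  moreover have "incseq (\<lambda>k. mfun C (w k) z)"
  proof (rule incseq_SucI)
    fix k
    have "(\<mu> * mfun C ((f ^^ k) y) z) / \<mu> ^ Suc k \<le> mfun C ((f ^^ Suc k) y) z / \<mu> ^ Suc k"
      using mfun_image_ge_eigenvector[OF Y z eig, of k] eig(2) by (intro divide_right_mono) auto
    then show "mfun C (w k) z \<le> mfun C (w (Suc k)) z"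
      using eig(2) by (simp add: mw)
  qed
  ultimately obtain l where l: "\<And>k. mfun C (w k) z \<le> l" "\<And>k. l \<le> Mfun C (w k) z"
    using incseq_decseq_common_bound mfun_le_Mfun[OF w z] by blast
  have "thompson_metric C (w k) (l *\<^sub>R z) \<le> hilbert_metric C ((f ^^ k) y) z" for k
  proof -
    have "thompson_metric C (w k) (l *\<^sub>R z) \<le> hilbert_metric C (w k) z"
      unfolding hilbert_metric_def using l mfun_pos[OF w z] cone_le_mfun[OF w z] cone_le_Mfun[OF w z]
      by (intro thompson_metric_le_of_bounds[OF w z])
    then show ?thesis
      using hilbert_metric_scaleR[OF _ Y z] eig(2) by (simp add: w_def)
  qed
  moreover have "l > 0"
    using l(1)[of 0] mfun_pos[OF w z, of 0] by linarith
  ultimately show ?thesis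
    using that by (simp add: w_def)
qed

end

locale normal_cone_map = cone_map + normal_ordered_cone
begin

abbreviation r :: real where
  "r \<equiv> real_of_ereal (cone_spectral_radius C f)"

lemma
  assumes y: "y \<in> interior C" and z: "z \<in> interior C" and "c > 0" "D > 0"
    and lower: "cone_le C (c *\<^sub>R z) (f z)" and upper: "cone_le C (f z) (D *\<^sub>R z)"
  shows norm_iter_ge_geometric: "(mfun C y z * norm z / \<kappa>) * c ^ k \<le> norm ((f ^^ k) y)"
    and norm_iter_le_geometric: "norm ((f ^^ k) y) \<le> (\<kappa> * Mfun C y z * norm z) * D ^ k"
proof -
  define a where "a = mfun C y z"
  define b where "b = Mfun C y z"
  have ab: "a > 0" "b > 0"
    using mfun_pos Mfun_pos y z by (auto simp: a_def b_def)
  have "cone_le C (a *\<^sub>R (c ^ k) *\<^sub>R z) (a *\<^sub>R (f ^^ k) z)"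
    using cone_le_scaleR[OF _ iter_cone_le_power(1)[OF z \<open>c > 0\<close> lower]] ab by simp
  moreover have "cone_le C (a *\<^sub>R (f ^^ k) z) ((f ^^ k) y)"
    using iter_mono[OF scaleR_interior[OF _ z] y cone_le_mfun[OF y z]] iter_scaleR[OF z] ab
    by (simp add: a_def)
  ultimately have "cone_le C (a *\<^sub>R (c ^ k) *\<^sub>R z) ((f ^^ k) y)"
    using cone_le_trans by blast
  then have "norm (a *\<^sub>R (c ^ k) *\<^sub>R z) \<le> \<kappa> * norm ((f ^^ k) y)"
    using normal scaleR_interior[OF _ z] interior_subset \<open>c > 0\<close> ab
    by (metis cone_le_def diff_zero zero_less_power mult_pos_pos scaleR_scaleR subsetD)
  then show "(a * norm z / \<kappa>) * c ^ k \<le> norm ((f ^^ k) y)"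
    using ab \<open>c > 0\<close> normal_const_pos by (simp add: field_simps)
  have "cone_le C ((f ^^ k) y) (b *\<^sub>R (f ^^ k) z)"
    using iter_mono[OF y scaleR_interior[OF _ z] cone_le_Mfun[OF y z]] iter_scaleR[OF z] ab
    by (simp add: b_def)
  moreover have "cone_le C (b *\<^sub>R (f ^^ k) z) (b *\<^sub>R (D ^ k) *\<^sub>R z)"
    using cone_le_scaleR[OF _ iter_cone_le_power(2)[OF z \<open>D > 0\<close> upper]] ab by simp
  ultimately have "cone_le C ((f ^^ k) y) (b *\<^sub>R (D ^ k) *\<^sub>R z)"
    using cone_le_trans by blast
  then have "norm ((f ^^ k) y) \<le> \<kappa> * norm (b *\<^sub>R (D ^ k) *\<^sub>R z)"
    using normal iter_interior[OF y] interior_subset by (metis cone_le_def diff_zero subsetD)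
  then show "norm ((f ^^ k) y) \<le> (\<kappa> * b * norm z) * D ^ k"
    using ab \<open>D > 0\<close> by (simp add: field_simps)
qed

lemma cone_spectral_radius_between:
  assumes z: "z \<in> interior C" and "c > 0" "D > 0"
    and lower: "cone_le C (c *\<^sub>R z) (f z)" and upper: "cone_le C (f z) (D *\<^sub>R z)"
  shows "c \<le> r" and "r \<le> D"
proof -
  define y where "y = (SOME y. y \<in> interior C)"
  have y: "y \<in> interior C"
    unfolding y_def using z by (rule someI)
  have "ereal c \<le> cone_spectral_radius C f" "cone_spectral_radius C f \<le> ereal D"
    unfolding cone_spectral_radius_def Let_def y_def[symmetric]
    using limsup_root_geometric_bounds[OF _ _ \<open>c > 0\<close> \<open>D > 0\<close>
        norm_iter_ge_geometric[OF y assms] norm_iter_le_geometric[OF y assms]]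
      mfun_pos[OF y z] Mfun_pos[OF y z] interior_nonzero[OF z] normal_const_pos by simp_all
  then show "c \<le> r" "r \<le> D"
    using \<open>c > 0\<close> by (cases "cone_spectral_radius C f"; simp)+
qed

lemma cone_spectral_radius_pos:
  assumes "z \<in> interior C" shows "r > 0"
proof -
  have "f z \<in> interior C"
    using maps_interior assms by auto
  then show ?thesis
    using cone_spectral_radius_between(1)[OF assms mfun_pos Mfun_pos cone_le_mfun cone_le_Mfun]
      assms by (meson less_le_trans mfun_pos)
qed

lemma cone_spectral_radius_eigenvalue:
  assumes "z \<in> interior C" "f z = \<mu> *\<^sub>R z" "\<mu> > 0"
  shows "r = \<mu>"
  using cone_spectral_radius_between[OF assms(1) assms(3) assms(3)] assms(2)
  by (simp add: cone_le_refl)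


lemma thompson_rate_of_hilbert_rate:
  assumes x: "x \<in> interior C" and u: "u \<in> interior C" and "0 < \<theta>" "\<theta> < 1"
    and rate: "decays_at_rate \<theta> (\<lambda>k. hilbert_metric C ((f ^^ k) x) u)"
  shows "\<exists>l>0. decays_at_rate \<theta> (\<lambda>k. thompson_metric C ((1 / r ^ k) *\<^sub>R (f ^^ k) x) (l *\<^sub>R u))"
proof -
  define \<mu> where "\<mu> = Mfun C (f u) u"
  have eig: "f u = \<mu> *\<^sub>R u"
    unfolding \<mu>_def
  proof (rule eigenvector_of_hilbert_approx[OF u])
    fix \<epsilon> :: real assume "\<epsilon> > 0"
    then obtain N where N: "\<forall>k\<ge>N. hilbert_metric C ((f ^^ k) x) u \<le> \<epsilon>"
      using decays_at_rate_eventually_le[OF rate \<open>\<theta> < 1\<close>] unfolding eventually_sequentially by blast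
    then show "\<exists>y\<in>interior C. hilbert_metric C y u \<le> \<epsilon> \<and> hilbert_metric C (f y) u \<le> \<epsilon>"
      using iter_interior[OF x, of N] N[rule_format, of N] N[rule_format, of "Suc N"]
      by (intro bexI[of _ "(f ^^ N) x"]) auto
  qed
  have "\<mu> > 0"
    using Mfun_pos maps_interior u by (auto simp: \<mu>_def)
  then have "r = \<mu>"
    using cone_spectral_radius_eigenvalue[OF u eig] by simp
  obtain l where "l > 0" and bound:
    "\<And>k. thompson_metric C ((1 / \<mu> ^ k) *\<^sub>R (f ^^ k) x) (l *\<^sub>R u) \<le> hilbert_metric C ((f ^^ k) x) u"
    using thompson_metric_normalized_iterate_le[OF x u eig \<open>\<mu> > 0\<close>] by blast
  have "decays_at_rate \<theta> (\<lambda>k. thompson_metric C ((1 / r ^ k) *\<^sub>R (f ^^ k) x) (l *\<^sub>R u))"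
    using \<open>r = \<mu>\<close> bound by (intro decays_at_rate_bigo[OF rate \<open>\<theta> > 0\<close> zero_less_one]) simp
  with \<open>l > 0\<close> show ?thesis
    by blast
qed

lemma norm_rate_of_thompson_rate:
  assumes x: "x \<in> interior C" and u: "u \<in> interior C" and "l > 0" "0 < \<theta>" "\<theta> < 1"
    and rate: "decays_at_rate \<theta> (\<lambda>k. thompson_metric C ((1 / r ^ k) *\<^sub>R (f ^^ k) x) (l *\<^sub>R u))"
  shows "decays_at_rate \<theta> (\<lambda>k. norm ((1 / r ^ k) *\<^sub>R (f ^^ k) x - l *\<^sub>R u))"
proof -
  have lu: "l *\<^sub>R u \<in> interior C"
    using scaleR_interior \<open>l > 0\<close> u by blast
  have iterate: "(1 / r ^ k) *\<^sub>R (f ^^ k) x \<in> interior C" for k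
    using scaleR_interior iter_interior[OF x] cone_spectral_radius_pos[OF x] by simp
  have "eventually (\<lambda>k. thompson_metric C ((1 / r ^ k) *\<^sub>R (f ^^ k) x) (l *\<^sub>R u) \<le> 1 / 2) sequentially"
    using decays_at_rate_eventually_le[OF rate \<open>\<theta> < 1\<close>, of "1 / 2"] by simp
  then have ev: "eventually (\<lambda>k. norm ((1 / r ^ k) *\<^sub>R (f ^^ k) x - l *\<^sub>R u)
      \<le> (2 * (2 * \<kappa> + 1) * norm (l *\<^sub>R u)) * thompson_metric C ((1 / r ^ k) *\<^sub>R (f ^^ k) x) (l *\<^sub>R u))
      sequentially"
    by eventually_elim (rule norm_diff_le_thompson_metric[OF iterate lu])
  have "2 * (2 * \<kappa> + 1) * norm (l *\<^sub>R u) > 0"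
    using normal_const_pos interior_nonzero[OF lu] by (simp add: add_pos_pos)
  then show ?thesis
    using decays_at_rate_bigo[OF rate \<open>\<theta> > 0\<close> _ ev] by blast
qed

lemma normalized_rate_of_norm_rate:
  assumes x: "x \<in> interior C" and "norm u = 1" "l > 0" "0 < \<theta>" "\<theta> < 1"
    and rate: "decays_at_rate \<theta> (\<lambda>k. norm ((1 / r ^ k) *\<^sub>R (f ^^ k) x - l *\<^sub>R u))"
  shows "decays_at_rate \<theta> (\<lambda>k. norm ((1 / norm ((f ^^ k) x)) *\<^sub>R (f ^^ k) x - u))"
proof -
  have "eventually (\<lambda>k. norm ((1 / r ^ k) *\<^sub>R (f ^^ k) x - l *\<^sub>R u) \<le> l / 2) sequentially"
    using decays_at_rate_eventually_le[OF rate \<open>\<theta> < 1\<close>, of "l / 2"] \<open>l > 0\<close> by simp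
  then have ev: "eventually (\<lambda>k. norm ((1 / norm ((f ^^ k) x)) *\<^sub>R (f ^^ k) x - u)
      \<le> (4 / l) * norm ((1 / r ^ k) *\<^sub>R (f ^^ k) x - l *\<^sub>R u)) sequentially"
  proof eventually_elim
    case (elim k)
    have "r > 0"
      using cone_spectral_radius_pos[OF x] .
    then have normalize: "(1 / norm ((1 / r ^ k) *\<^sub>R (f ^^ k) x)) *\<^sub>R (1 / r ^ k) *\<^sub>R (f ^^ k) x
        = (1 / norm ((f ^^ k) x)) *\<^sub>R (f ^^ k) x"
      by (simp add: abs_of_pos)
    show ?case
      using norm_normalize_sub_le[OF \<open>norm u = 1\<close> \<open>l > 0\<close> elim] by (simp only: normalize)
  qed
  show ?thesis
    using decays_at_rate_bigo[OF rate \<open>\<theta> > 0\<close> _ ev] \<open>l > 0\<close> by simp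
qed

lemma hilbert_rate_of_normalized_rate:
  assumes x: "x \<in> interior C" and u: "u \<in> interior C" and "0 < \<theta>" "\<theta> < 1"
    and rate: "decays_at_rate \<theta> (\<lambda>k. norm ((1 / norm ((f ^^ k) x)) *\<^sub>R (f ^^ k) x - u))"
  shows "decays_at_rate \<theta> (\<lambda>k. hilbert_metric C ((f ^^ k) x) u)"
proof -
  obtain \<rho> where "\<rho> > 0" and bound: "\<And>y. y \<in> interior C \<Longrightarrow> norm (y - u) \<le> \<rho> / 2 \<Longrightarrow>
      hilbert_metric C y u \<le> (4 / \<rho>) * norm (y - u)"
    using hilbert_metric_le_norm_diff[OF u] by blast
  have "eventually (\<lambda>k. norm ((1 / norm ((f ^^ k) x)) *\<^sub>R (f ^^ k) x - u) \<le> \<rho> / 2) sequentially"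
    using decays_at_rate_eventually_le[OF rate \<open>\<theta> < 1\<close>, of "\<rho> / 2"] \<open>\<rho> > 0\<close> by simp
  then have ev: "eventually (\<lambda>k. hilbert_metric C ((f ^^ k) x) u
      \<le> (4 / \<rho>) * norm ((1 / norm ((f ^^ k) x)) *\<^sub>R (f ^^ k) x - u)) sequentially"
  proof eventually_elim
    case (elim k)
    have "1 / norm ((f ^^ k) x) > 0"
      using interior_nonzero[OF iter_interior[OF x]] by simp
    then show ?case
      using bound[OF scaleR_interior[OF _ iter_interior[OF x]] elim]
        hilbert_metric_scaleR[OF _ iter_interior[OF x] u] by simp
  qed
  show ?thesis
    using decays_at_rate_bigo[OF rate \<open>\<theta> > 0\<close> _ ev] \<open>\<rho> > 0\<close> by simp
qed

end

theorem mainTheorem6: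
  fixes C :: "'a::banach set" and f :: "'a \<Rightarrow> 'a" and x u :: 'a and \<theta> :: real
  assumes "closed_cone C" and "normal_cone C" and "interior C \<noteq> {}"
    and "f ` interior C \<subseteq> interior C"
    and "order_preserving_on C (interior C) f"
    and "homogeneous_on (interior C) f"
    and "x \<in> interior C" and "u \<in> interior C" and "norm u = 1"
    and "0 < \<theta>" and "\<theta> < 1"
  defines "r \<equiv> real_of_ereal (cone_spectral_radius C f)"
  shows "(limsup (\<lambda>k. ereal (hilbert_metric C ((f ^^ k) x) u powr (1 / real k))) \<le> ereal \<theta>
          \<longleftrightarrow> (\<exists>l>0. limsup (\<lambda>k. ereal (thompson_metric C ((1 / r ^ k) *\<^sub>R (f ^^ k) x) (l *\<^sub>R u)
                     powr (1 / real k))) \<le> ereal \<theta>))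
       \<and> ((\<exists>l>0. limsup (\<lambda>k. ereal (thompson_metric C ((1 / r ^ k) *\<^sub>R (f ^^ k) x) (l *\<^sub>R u)
                     powr (1 / real k))) \<le> ereal \<theta>)
          \<longleftrightarrow> (\<exists>l>0. limsup (\<lambda>k. ereal (norm ((1 / r ^ k) *\<^sub>R (f ^^ k) x - l *\<^sub>R u)
                     powr (1 / real k))) \<le> ereal \<theta>))
       \<and> ((\<exists>l>0. limsup (\<lambda>k. ereal (norm ((1 / r ^ k) *\<^sub>R (f ^^ k) x - l *\<^sub>R u)
                     powr (1 / real k))) \<le> ereal \<theta>)
          \<longleftrightarrow> limsup (\<lambda>k. ereal (norm ((1 / norm ((f ^^ k) x)) *\<^sub>R (f ^^ k) x - u)
                     powr (1 / real k))) \<le> ereal \<theta>)"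
proof -
  obtain \<kappa> where "\<kappa> > 0" "\<forall>x y. cone_le C 0 x \<and> cone_le C x y \<longrightarrow> norm x \<le> \<kappa> * norm y"
    using assms(2) unfolding normal_cone_def by blast
  moreover have "C \<noteq> UNIV"
    using closed_cone_neq_UNIV[OF assms(1), of u] assms(9) by force
  ultimately interpret normal_cone_map C f \<kappa>
    using assms(1,4-6) by unfold_locales auto
  note rate_iff = limsup_root_le_iff_decays_at_rate[OF \<open>0 < \<theta>\<close>]
  have thompson_nonneg: "0 \<le> thompson_metric C ((1 / r ^ k) *\<^sub>R (f ^^ k) x) (l *\<^sub>R u)" if "l > 0" for k l
    using that scaleR_interior iter_interior assms(7,8) cone_spectral_radius_pos[OF assms(7)]
    by (intro thompson_metric_nonneg) (simp_all add: r_def)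
  have thompson_iff: "(\<exists>l>0. limsup (\<lambda>k. ereal (thompson_metric C ((1 / r ^ k) *\<^sub>R (f ^^ k) x) (l *\<^sub>R u)
        powr (1 / real k))) \<le> ereal \<theta>)
      \<longleftrightarrow> (\<exists>l>0. decays_at_rate \<theta> (\<lambda>k. thompson_metric C ((1 / r ^ k) *\<^sub>R (f ^^ k) x) (l *\<^sub>R u)))"
    using rate_iff[OF thompson_nonneg] by auto
  have hilbert_iff: "limsup (\<lambda>k. ereal (hilbert_metric C ((f ^^ k) x) u powr (1 / real k))) \<le> ereal \<theta>
      \<longleftrightarrow> decays_at_rate \<theta> (\<lambda>k. hilbert_metric C ((f ^^ k) x) u)"
    using iter_interior assms(7,8) by (intro rate_iff hilbert_metric_nonneg)
  have norm_iff: "limsup (\<lambda>k. ereal (norm (v k) powr (1 / real k))) \<le> ereal \<theta>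
      \<longleftrightarrow> decays_at_rate \<theta> (\<lambda>k. norm (v k))" for v :: "nat \<Rightarrow> 'a"
    by (intro rate_iff norm_ge_zero)
  show ?thesis
    unfolding thompson_iff hilbert_iff norm_iff
    using thompson_rate_of_hilbert_rate[OF assms(7,8,10,11), folded r_def]
      norm_rate_of_thompson_rate[OF assms(7,8) _ assms(10,11), folded r_def]
      normalized_rate_of_norm_rate[OF assms(7,9) _ assms(10,11), folded r_def]
      hilbert_rate_of_normalized_rate[OF assms(7,8,10,11)] by blast
qed

end
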